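(* For integers $m,j$ let $U(m,j):=\binom{m-j}{j}2^j$ if $0\le j$ and $2j\le m$, and $U(m,j):=0$ otherwise. For $t\ge0$ let $C_t:=\binom{2t}{t}2^t$ (so $C_t=U(3t,t)$), and for $t\ge1$ let \[D_t:=\sum_{j=0}^{t-1}U(3t,j)-\sum_{j\ge t+1}U(3t,j),\qquad B_t:=\sum_{j=0}^{t-1}U(3t-1,j)-\sum_{j\ge t+1}U(3t-1,j).\] Then for all $t\ge1$: (i) $D_t=C_{t-1}-C_{t-2}+C_{t-3}-\cdots+(-1)^{t-1}C_0$; (ii) $0<D_t<\tfrac12C_t$; (iii) $B_t=\tfrac12C_t-D_t$ and $0<B_t<\tfrac12C_t$; (iv) as formal power series, $\sum_{t\ge1}D_tz^t=\dfrac{z}{(1+z)\sqrt{1-8z}}$. *)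

theory Defs
  imports Complex_Main "HOL-Computational_Algebra.Formal_Power_Series"
begin

definition U :: "int \<Rightarrow> int \<Rightarrow> int" where
  "U m j = (if 0 \<le> j \<and> 2 * j \<le> m then int (nat (m - j) choose nat j) * 2 ^ nat j else 0)"

definition C :: "nat \<Rightarrow> int" where
  "C t = int ((2 * t) choose t) * 2 ^ t"

text \<open>The sums over j >= t+1 are finite: U(m,j) = 0 once 2j > m, so for m <= 3t
  the range t+1..3t contains all nonzero terms.\<close>
definition D :: "nat \<Rightarrow> int" where
  "D t = (\<Sum>j = 0..<t. U (int (3 * t)) (int j)) - (\<Sum>j \<in> {t+1..3*t}. U (int (3 * t)) (int j))"

definition B :: "nat \<Rightarrow> int" where
  "B t = (\<Sum>j = 0..<t. U (int (3 * t) - 1) (int j)) - (\<Sum>j \<in> {t+1..3*t}. U (int (3 * t) - 1) (int j))"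

definition sqrt_1m8z :: "real fps" where
  "sqrt_1m8z = fps_radical (\<lambda>k x. root k x) 2 (1 - 8 * fps_X)"

end

theory Submission
  imports Defs
begin

(* The numbers U obey the Pascal-type rule U(m,j) = U(m-1,j) + 2 U(m-2,j-1), so the row sums
   are the Jacobsthal numbers (2^(m+1) + (-1)^m)/3.  Hence D_t and B_t are determined by the
   head sums a_t = sum_{j<t} U(3t,j) and b_t = sum_{j<t} U(3t-1,j) (D_head and B_head below).
   Unrolling the rule from row 3t to row 3t+3 gives linear recurrences for a_t and b_t, which
   yield D_(t+1) + D_t = C_t and 2(B_t + D_t) = C_t.  Everything else follows from these two
   identities together with C_(t+1) >= 2 C_t and sum_t C_t z^t = 1/sqrt(1 - 8z), which holds
   because this series solves (1 - 8z) G' = 4 G with G(0) = 1. *)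

lemma U_eq_0_if_neg_index: "j < 0 \<Longrightarrow> U m j = 0"
  by (simp add: U_def)

lemma U_eq_0_if_short_row: "m < 2 * j \<Longrightarrow> U m j = 0"
  by (simp add: U_def)

lemma U_rec:
  assumes "m \<ge> 1"
  shows "U m j = U (m - 1) j + 2 * U (m - 2) (j - 1)"
proof (cases "j \<le> 0")
  case True
  then show ?thesis using assms by (cases "j = 0") (auto simp: U_def)
next
  case False
  define i where "i = nat (j - 1)"
  have j: "j = int i + 1" using False by (simp add: i_def)
  consider (inner) "2 * j \<le> m - 1" | (edge) "2 * j = m" | (outside) "m < 2 * j" by linarith
  then show ?thesis
  proof cases
    case inner
    define n where "n = nat (m - 1 - j)"
    have n: "m - 1 - j = int n" using inner j by (simp add: n_def)
    have "nat (m - j) = Suc n" "nat (m - 1 - j) = n" "nat (m - 2 - (j - 1)) = n" "nat j = Suc i"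
      using n j by simp_all
    then show ?thesis using inner j by (simp add: U_def algebra_simps)
  next
    case edge
    have "nat (m - j) = Suc i" "nat (m - 2 - (j - 1)) = i" "nat j = Suc i"
      using edge j by simp_all
    then show ?thesis using edge j by (simp add: U_def)
  qed (simp add: U_def)
qed

definition U_prefix :: "int \<Rightarrow> nat \<Rightarrow> int" where
  "U_prefix m n = (\<Sum>j<n. U m (int j))"

lemma U_prefix_0 [simp]: "U_prefix m 0 = 0"
  by (simp add: U_prefix_def)

lemma U_prefix_Suc: "U_prefix m (Suc n) = U_prefix m n + U m (int n)"
  by (simp add: U_prefix_def)

lemma U_prefix_rec:
  assumes "m \<ge> 1"
  shows "U_prefix m (Suc n) = U_prefix (m - 1) (Suc n) + 2 * U_prefix (m - 2) n"
proof -
  have "U_prefix m (Suc n) = U_prefix (m - 1) (Suc n) + 2 * (\<Sum>j<Suc n. U (m - 2) (int j - 1))"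
    using U_rec[OF assms] by (simp add: U_prefix_def sum.distrib sum_distrib_left)
  also have "(\<Sum>j<Suc n. U (m - 2) (int j - 1)) = U_prefix (m - 2) n"
    unfolding sum.lessThan_Suc_shift U_prefix_def by (simp add: U_eq_0_if_neg_index)
  finally show ?thesis .
qed

lemma U_prefix_stable:
  assumes "m < 2 * int k" "k \<le> n"
  shows "U_prefix m n = U_prefix m k"
  using assms(2)
proof (induction n rule: dec_induct)
  case (step n)
  then show ?case using assms(1) by (simp add: U_prefix_Suc U_eq_0_if_short_row)
qed simp

lemma U_row_sum:
  assumes "m < 2 * n"
  shows "3 * U_prefix (int m) n = 2 ^ Suc m + (-1) ^ m"
  using assms
proof (induction m arbitrary: n rule: induct_nat_012)
  case 0
  then have "U_prefix 0 n = U_prefix 0 1" by (intro U_prefix_stable) auto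
  then show ?case by (simp add: U_prefix_Suc U_def)
next
  case 1
  then have "U_prefix 1 n = U_prefix 1 1" by (intro U_prefix_stable) auto
  then show ?case by (simp add: U_prefix_Suc U_def)
next
  case (ge2 m)
  then obtain k where n: "n = Suc k" by (cases n) auto
  have "U_prefix (int (Suc (Suc m))) n = U_prefix (int (Suc m)) n + 2 * U_prefix (int m) k"
    using U_prefix_rec[of "int (Suc (Suc m))" k] n by simp
  then show ?case using ge2.IH(1)[of k] ge2.IH(2)[of n] ge2.prems n by simp
qed

lemma C_Suc_eq: "C (Suc n) = 4 * (int ((2 * n + 1) choose n) * 2 ^ n)"
proof -
  have "(2 * n + 1) choose Suc n = (2 * n + 1) choose n"
    using binomial_symmetric[of n "2 * n + 1"] by simp
  moreover have "(2 * Suc n) choose Suc n = ((2 * n + 1) choose n) + ((2 * n + 1) choose Suc n)"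
    using binomial_Suc_Suc[of "2 * n + 1" n] by simp
  ultimately have "(2 * Suc n) choose Suc n = 2 * ((2 * n + 1) choose n)"
    by linarith
  then show ?thesis by (simp add: C_def)
qed

lemma U_central: "U (int (3 * t)) (int t) = C t"
proof -
  have "nat (int (3 * t) - int t) = 2 * t" by simp
  then show ?thesis by (simp add: U_def C_def)
qed

lemma U_central_succ_row: "4 * U (int (3 * t) + 1) (int t) = C (Suc t)"
proof -
  have "nat (int (3 * t) + 1 - int t) = 2 * t + 1" by simp
  then show ?thesis by (simp add: U_def C_Suc_eq)
qed

lemma U_central_pred_row:
  assumes "t \<ge> 1"
  shows "2 * U (int (3 * t) - 1) (int t) = C t"
proof -
  obtain s where t: "t = Suc s" using assms by (cases t) auto
  have "nat (int (3 * t) - 1 - int t) = 2 * s + 1" "nat (int t) = Suc s" using t by simp_all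
  moreover have "(2 * s + 1) choose Suc s = (2 * s + 1) choose s"
    using binomial_symmetric[of s "2 * s + 1"] by simp
  ultimately show ?thesis using t by (simp add: U_def C_Suc_eq)
qed

lemma C_pos: "C t > 0"
  by (simp add: C_def)

lemma C_Suc: "int (Suc n) * C (Suc n) = (8 * int n + 4) * C n"
proof -
  have "Suc n * ((2 * n + 1) choose n) = (2 * n + 1) * ((2 * n) choose n)"
    using Suc_times_binomial_eq[of "2 * n" n] binomial_symmetric[of n "2 * n + 1"] by simp
  then have binom: "int (Suc n) * int ((2 * n + 1) choose n) = int (2 * n + 1) * int ((2 * n) choose n)"
    by (simp only: of_nat_mult[symmetric])
  have "int (Suc n) * C (Suc n) = 4 * 2 ^ n * (int (Suc n) * int ((2 * n + 1) choose n))"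
    unfolding C_Suc_eq by (simp only: ac_simps)
  also have "\<dots> = (8 * int n + 4) * C n"
    unfolding binom C_def by (simp add: algebra_simps)
  finally show ?thesis .
qed

lemma C_Suc_ge: "2 * C t \<le> C (Suc t)"
proof -
  have "int (Suc t) * (2 * C t) \<le> (8 * int t + 4) * C t"
    using C_pos[of t] by (simp add: algebra_simps)
  also have "\<dots> = int (Suc t) * C (Suc t)" by (rule C_Suc[symmetric])
  finally show ?thesis by (simp only: mult_le_cancel_left_pos of_nat_0_less_iff zero_less_Suc)
qed

lemma sum_lessThan_Suc_split:
  fixes f :: "nat \<Rightarrow> 'a::comm_monoid_add"
  assumes "t \<le> n"
  shows "(\<Sum>j<Suc n. f j) = (\<Sum>j = 0..<t. f j) + f t + (\<Sum>j \<in> {t+1..n}. f j)"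
proof -
  have "(\<Sum>j<Suc n. f j) = (\<Sum>j = 0..<Suc n. f j)"
    by (simp only: lessThan_atLeast0)
  also have "\<dots> = (\<Sum>j = 0..<t. f j) + (\<Sum>j = t..<Suc n. f j)"
    using assms by (intro sum.atLeastLessThan_concat[symmetric]) auto
  also have "(\<Sum>j = t..<Suc n. f j) = f t + (\<Sum>j \<in> {t+1..n}. f j)"
    using assms by (simp add: atLeastLessThanSuc_atLeastAtMost sum.atLeast_Suc_atMost)
  finally show ?thesis by (simp add: add.assoc)
qed

definition D_head :: "nat \<Rightarrow> int" where
  "D_head t = U_prefix (int (3 * t)) t"

definition B_head :: "nat \<Rightarrow> int" where
  "B_head t = U_prefix (int (3 * t) - 1) t"

(* The tail sum in D is the row sum minus the head sum and the central term U(3t,t) = C_t. *)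
lemma D_eq_head: "3 * D t = 6 * D_head t + 3 * C t - 2 * 8 ^ t - (-1) ^ t"
proof -
  have "U_prefix (int (3 * t)) (3 * t + 1)
      = D_head t + C t + (\<Sum>j \<in> {t+1..3*t}. U (int (3 * t)) (int j))"
    using sum_lessThan_Suc_split[of t "3 * t" "\<lambda>j. U (int (3 * t)) (int j)"] U_central[of t]
    by (simp add: U_prefix_def D_head_def lessThan_atLeast0)
  moreover have "3 * U_prefix (int (3 * t)) (3 * t + 1) = 2 * 8 ^ t + (-1) ^ t"
    using U_row_sum[of "3 * t" "3 * t + 1"] by (simp add: power_mult)
  ultimately show ?thesis by (simp add: D_def D_head_def U_prefix_def lessThan_atLeast0)
qed

lemma B_eq_head:
  assumes "t \<ge> 1"
  shows "6 * B t = 12 * B_head t + 3 * C t - 2 * 8 ^ t + 2 * (-1) ^ t"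
proof -
  have "U_prefix (int (3 * t) - 1) (3 * t + 1)
      = B_head t + U (int (3 * t) - 1) (int t) + (\<Sum>j \<in> {t+1..3*t}. U (int (3 * t) - 1) (int j))"
    using sum_lessThan_Suc_split[of t "3 * t" "\<lambda>j. U (int (3 * t) - 1) (int j)"]
    by (simp add: U_prefix_def B_head_def lessThan_atLeast0)
  moreover have "3 * U_prefix (int (3 * t) - 1) (3 * t + 1) = 8 ^ t - (-1) ^ t"
  proof -
    obtain s where t: "t = Suc s" using assms by (cases t) auto
    have "int (3 * t) - 1 = int (Suc (3 * s + 1))" using t by simp
    then show ?thesis using U_row_sum[of "Suc (3 * s + 1)" "3 * t + 1"] t by (simp add: power_mult)
  qed
  ultimately show ?thesis
    using U_central_pred_row[OF assms] by (simp add: B_def B_head_def U_prefix_def lessThan_atLeast0)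
qed

lemma U_prefix_row_3t_plus_1: "U_prefix (int (3 * t) + 1) (Suc t) = D_head t + C t + 2 * B_head t"
  using U_prefix_rec[of "int (3 * t) + 1" t] U_central[of t]
  by (simp add: U_prefix_Suc D_head_def B_head_def)

lemma B_head_Suc: "B_head (Suc t) = 3 * D_head t + 2 * B_head t + C t"
proof -
  have "B_head (Suc t) = U_prefix (int (3 * t) + 1) (Suc t) + 2 * D_head t"
    using U_prefix_rec[of "int (3 * t) + 2" t] by (simp add: B_head_def D_head_def add.commute)
  then show ?thesis using U_prefix_row_3t_plus_1[of t] by simp
qed

lemma D_head_Suc: "2 * D_head (Suc t) = 10 * D_head t + 12 * B_head t + 6 * C t - C (Suc t)"
proof -
  have "D_head (Suc t) = B_head (Suc t) + 2 * U_prefix (int (3 * t) + 1) t"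
    using U_prefix_rec[of "int (3 * t) + 3" t] by (simp add: B_head_def D_head_def add.commute)
  moreover have "4 * U_prefix (int (3 * t) + 1) t = 4 * U_prefix (int (3 * t) + 1) (Suc t) - C (Suc t)"
    using U_central_succ_row[of t] by (simp add: U_prefix_Suc)
  ultimately show ?thesis using B_head_Suc[of t] U_prefix_row_3t_plus_1[of t] by simp
qed

lemma head_sum: "2 * (D_head t + B_head t) = 8 ^ t - C t"
proof (induction t)
  case 0
  then show ?case by (simp add: D_head_def B_head_def C_def)
next
  case (Suc t)
  then show ?case using D_head_Suc[of t] B_head_Suc[of t] by simp
qed

lemma D_Suc_add: "D (Suc t) + D t = C t"
proof -
  have "3 * (D (Suc t) + D t) = 3 * C t"
    using D_eq_head[of t] D_eq_head[of "Suc t"] D_head_Suc[of t] head_sum[of t] by simp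
  then show ?thesis by simp
qed

lemma B_add_D:
  assumes "t \<ge> 1"
  shows "2 * (B t + D t) = C t"
proof -
  have "6 * (2 * (B t + D t)) = 6 * C t"
    using B_eq_head[OF assms] D_eq_head[of t] head_sum[of t] by simp
  then show ?thesis by simp
qed

lemma D_0: "D 0 = 0"
  by (simp add: D_def)

lemma D_alternating: "D t = (\<Sum>k<t. (-1) ^ k * C (t - 1 - k))"
proof (induction t)
  case 0
  then show ?case by (simp add: D_0)
next
  case (Suc t)
  have "(\<Sum>k<Suc t. (-1) ^ k * C (Suc t - 1 - k)) = C t - (\<Sum>k<t. (-1) ^ k * C (t - 1 - k))"
    unfolding sum.lessThan_Suc_shift by (simp add: sum_negf)
  then show ?case using D_Suc_add[of t] Suc.IH by simp
qed

lemma D_bounds: "t \<ge> 1 \<Longrightarrow> 0 < D t \<and> 2 * D t < C t"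
proof (induction t rule: dec_induct)
  case base
  have "D 1 = 1" using D_Suc_add[of 0] by (simp add: D_0 C_def)
  then show ?case by (simp add: C_def)
next
  case (step t)
  then show ?case using D_Suc_add[of t] C_Suc_ge[of t] by simp
qed

definition C_fps :: "real fps" where
  "C_fps = Abs_fps (\<lambda>n. real_of_int (C n))"

lemma C_fps_nth_0: "fps_nth C_fps 0 = 1"
  by (simp add: C_fps_def C_def)

lemma C_fps_deriv: "(1 - 8 * fps_X) * fps_deriv C_fps = 4 * C_fps"
proof (rule fps_ext)
  fix n
  have rec: "real (Suc n) * real_of_int (C (Suc n)) = (8 * real n + 4) * real_of_int (C n)"
    using arg_cong[OF C_Suc[of n], of real_of_int] by simp
  show "fps_nth ((1 - 8 * fps_X) * fps_deriv C_fps) n = fps_nth (4 * C_fps) n"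
  proof (cases n)
    case 0
    then show ?thesis using rec by (simp add: C_fps_def fps_mult_nth numeral_fps_const)
  next
    case (Suc m)
    then show ?thesis using rec
      by (simp add: C_fps_def numeral_fps_const fps_const_mult_left algebra_simps)
  qed
qed

lemma C_fps_square: "C_fps\<^sup>2 * (1 - 8 * fps_X) = 1"
proof -
  define H where "H = C_fps\<^sup>2 * (1 - 8 * fps_X)"
  have "fps_deriv H = 2 * C_fps * ((1 - 8 * fps_X) * fps_deriv C_fps) - 8 * C_fps\<^sup>2"
    unfolding H_def by (simp add: fps_deriv_power algebra_simps power2_eq_square numeral_fps_const)
  also have "\<dots> = 0"
    unfolding C_fps_deriv by (simp add: algebra_simps power2_eq_square)
  finally have "H = fps_const (fps_nth H 0)" by simp
  moreover have "fps_nth H 0 = 1" unfolding H_def by (simp add: C_fps_nth_0 power2_eq_square)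
  ultimately show ?thesis unfolding H_def by simp
qed

lemma sqrt_1m8z_square: "sqrt_1m8z\<^sup>2 = 1 - 8 * fps_X"
proof -
  have "(fps_radical (\<lambda>k x. root k x) (Suc 1) (1 - 8 * fps_X)) ^ Suc 1 = (1 - 8 * fps_X :: real fps)"
    by (subst power_radical[symmetric]) (simp_all add: numeral_fps_const)
  then show ?thesis unfolding sqrt_1m8z_def by (simp add: numeral_2_eq_2)
qed

lemma sqrt_1m8z_nth_0: "fps_nth sqrt_1m8z 0 = 1"
  by (simp add: sqrt_1m8z_def numeral_fps_const)

lemma C_fps_times_sqrt_1m8z: "C_fps * sqrt_1m8z = 1"
proof -
  have "(C_fps * sqrt_1m8z)\<^sup>2 = 1"
    using C_fps_square sqrt_1m8z_square by (simp add: power_mult_distrib)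
  then have "(C_fps * sqrt_1m8z - 1) * (C_fps * sqrt_1m8z + 1) = 0"
    by (simp add: algebra_simps power2_eq_square)
  moreover have "fps_nth (C_fps * sqrt_1m8z + 1) 0 \<noteq> 0"
    by (simp add: C_fps_nth_0 sqrt_1m8z_nth_0)
  ultimately show ?thesis by (metis right_minus_eq mult_eq_0_iff fps_zero_nth)
qed

lemma D_fps: "Abs_fps (\<lambda>t. if t = 0 then 0 else real_of_int (D t)) = fps_X / ((1 + fps_X) * sqrt_1m8z)"
proof -
  define A where "A = Abs_fps (\<lambda>t. if t = 0 then 0 else real_of_int (D t))"
  have A: "A * (1 + fps_X) = fps_X * C_fps"
  proof (rule fps_ext)
    fix n
    show "fps_nth (A * (1 + fps_X)) n = fps_nth (fps_X * C_fps) n"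
    proof (cases n)
      case (Suc m)
      have "real_of_int (D (Suc m)) + real_of_int (D m) = real_of_int (C m)"
        using arg_cong[OF D_Suc_add[of m], of real_of_int] by simp
      then show ?thesis
        using Suc D_0 D_Suc_add[of 0] by (simp add: A_def C_fps_def algebra_simps mult.commute[of _ fps_X])
    qed (simp add: A_def)
  qed
  have "fps_nth ((1 + fps_X) * sqrt_1m8z) 0 \<noteq> 0" by (simp add: sqrt_1m8z_nth_0)
  then have "(1 + fps_X) * sqrt_1m8z \<noteq> 0" by (metis fps_zero_nth)
  moreover have "A * ((1 + fps_X) * sqrt_1m8z) = fps_X"
    by (simp add: mult.assoc[symmetric] A) (simp add: mult.assoc C_fps_times_sqrt_1m8z)
  ultimately show ?thesis unfolding A_def[symmetric] by (metis nonzero_mult_div_cancel_right)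
qed

theorem mainTheorem10:
  shows "(\<forall>t::nat. t \<ge> 1 \<longrightarrow>
            D t = (\<Sum>k<t. (-1) ^ k * C (t - 1 - k))
          \<and> (0 < D t \<and> real_of_int (D t) < real_of_int (C t) / 2)
          \<and> (real_of_int (B t) = real_of_int (C t) / 2 - real_of_int (D t)
             \<and> 0 < B t \<and> real_of_int (B t) < real_of_int (C t) / 2))
       \<and> Abs_fps (\<lambda>t. if t = 0 then 0 else real_of_int (D t))
           = fps_X / ((1 + fps_X) * sqrt_1m8z)"
proof (intro conjI allI impI D_alternating D_fps)
  fix t :: nat
  assume "t \<ge> 1"
  then have D: "0 < D t" "2 * D t < C t" and BD: "2 * (B t + D t) = C t"
    using D_bounds B_add_D by auto
  have BD_real: "2 * (real_of_int (B t) + real_of_int (D t)) = real_of_int (C t)"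
    using arg_cong[OF BD, of real_of_int] by simp
  show "0 < D t" by (fact D(1))
  show "real_of_int (B t) = real_of_int (C t) / 2 - real_of_int (D t)" using BD_real by simp
  show "real_of_int (B t) < real_of_int (C t) / 2" using BD_real D(1) by simp
  show "real_of_int (D t) < real_of_int (C t) / 2" using D(2) by linarith
  show "0 < B t" using D(2) BD by simp
qed

end
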